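(* For every partition $(P_H,P_L)$ of $E$ with $P_L\neq\emptyset$ we have $\sum_{e\in P_L}\mathrm{wt}_{P_L}(e)\le b$. If moreover $0<\epsilon<1$, $\bar b,\bar w$ satisfy $b/2\le\bar b\le 2b$ and $w/6\le\bar w\le 6w$, and $(P_H,P_L)$ is appropriate with respect to $\bar b,\bar w,\epsilon$, then $$b(1-c_H\epsilon)\le \sum_{e\in P_L}\mathrm{wt}_{P_L}(e)\le b,$$ where $c_H=1.77\times 10^4$.
   Context: Let $G=(V,E)$ be a bipartite graph with bipartition $V=U\cup L$; $d_v$ is the degree of $v$; for $e=(u,v)$, $d_e=d_u+d_v-2$; $w$ is the number of wedges (paths with two edges). A butterfly is a set of four distinct vertices $\{u_1,u_2,v_1,v_2\}$, $u_i\in U$, $v_i\in L$, with all four pairs $u_iv_j$ edges (its four edges); $b$ is the number of butterflies and $b(e)$ the number containing edge $e$. Given a nonempty $P_L\subseteq E$: for a butterfly $B$, $\mathrm{wt}_{P_L}(B)=0$ if none of its edges lies in $P_L$, and $\mathrm{wt}_{P_L}(B)=1/\ell$ if exactly $\ell>0$ of its edges lie in $P_L$; for an edge $e$, $\mathrm{wt}_{P_L}(e)=0$ if $e\notin P_L$ and $\mathrm{wt}_{P_L}(e)=\sum_{B\ni e}\mathrm{wt}_{P_L}(B)$ (sum over butterflies containing $e$) if $e\in P_L$. Given $\bar b,\bar w,\epsilon$, an edge $e$ is heavy if $b(e)>2\bar b^{3/4}/\epsilon^{1/4}$ or $d_e>\bar w/(\epsilon\bar b)^{1/4}$, and light if $b(e)<\bar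 b^{3/4}/(2\epsilon^{1/4})$ and $d_e<\bar w/(\epsilon\bar b)^{1/4}$. A partition $(P_H,P_L)$ of $E$ is appropriate if every heavy edge is in $P_H$ and every light edge is in $P_L$. *)

theory Defs
  imports Complex_Main
begin

definition bip_graph :: "'a set \<Rightarrow> 'a set \<Rightarrow> ('a \<times> 'a) set \<Rightarrow> bool" where
  "bip_graph U L E \<longleftrightarrow> finite U \<and> finite L \<and> U \<inter> L = {} \<and> E \<subseteq> U \<times> L"

definition vdeg :: "('a \<times> 'a) set \<Rightarrow> 'a \<Rightarrow> nat" where
  "vdeg E x = card {e \<in> E. fst e = x \<or> snd e = x}"

definition edeg :: "('a \<times> 'a) set \<Rightarrow> 'a \<times> 'a \<Rightarrow> real" where
  "edeg E e = real (vdeg E (fst e)) + real (vdeg E (snd e)) - 2"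

definition wedges :: "('a \<times> 'a) set \<Rightarrow> ('a \<times> 'a) set set" where
  "wedges E = {{e1, e2} | e1 e2. e1 \<in> E \<and> e2 \<in> E \<and> e1 \<noteq> e2 \<and>
                 (fst e1 = fst e2 \<or> snd e1 = snd e2)}"

definition num_wedges :: "('a \<times> 'a) set \<Rightarrow> nat" where
  "num_wedges E = card (wedges E)"

definition butterflies :: "'a set \<Rightarrow> 'a set \<Rightarrow> ('a \<times> 'a) set \<Rightarrow> 'a set set" where
  "butterflies U L E = {{u1, u2, v1, v2} | u1 u2 v1 v2.
      u1 \<in> U \<and> u2 \<in> U \<and> v1 \<in> L \<and> v2 \<in> L \<and> u1 \<noteq> u2 \<and> v1 \<noteq> v2 \<and>
      (u1, v1) \<in> E \<and> (u1, v2) \<in> E \<and> (u2, v1) \<in> E \<and> (u2, v2) \<in> E}"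

definition bfly_edges :: "'a set \<Rightarrow> 'a set \<Rightarrow> 'a set \<Rightarrow> ('a \<times> 'a) set" where
  "bfly_edges U L B = {(u, v). u \<in> B \<inter> U \<and> v \<in> B \<inter> L}"

definition num_bfly :: "'a set \<Rightarrow> 'a set \<Rightarrow> ('a \<times> 'a) set \<Rightarrow> nat" where
  "num_bfly U L E = card (butterflies U L E)"

definition edge_bfly :: "'a set \<Rightarrow> 'a set \<Rightarrow> ('a \<times> 'a) set \<Rightarrow> 'a \<times> 'a \<Rightarrow> nat" where
  "edge_bfly U L E e = card {B \<in> butterflies U L E. e \<in> bfly_edges U L B}"

definition wt_bfly :: "'a set \<Rightarrow> 'a set \<Rightarrow> ('a \<times> 'a) set \<Rightarrow> 'a set \<Rightarrow> real" where
  "wt_bfly U L P B = (let l = card (bfly_edges U L B \<inter> P) in if l = 0 then 0 else 1 / real l)"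

definition wt_edge :: "'a set \<Rightarrow> 'a set \<Rightarrow> ('a \<times> 'a) set \<Rightarrow> ('a \<times> 'a) set \<Rightarrow> 'a \<times> 'a \<Rightarrow> real" where
  "wt_edge U L E P e = (if e \<notin> P then 0 else
      (\<Sum>B \<in> {B \<in> butterflies U L E. e \<in> bfly_edges U L B}. wt_bfly U L P B))"

definition heavy :: "'a set \<Rightarrow> 'a set \<Rightarrow> ('a \<times> 'a) set \<Rightarrow> real \<Rightarrow> real \<Rightarrow> real \<Rightarrow> 'a \<times> 'a \<Rightarrow> bool" where
  "heavy U L E bb wb eps e \<longleftrightarrow>
     real (edge_bfly U L E e) > 2 * bb powr (3/4) / eps powr (1/4) \<or>
     edeg E e > wb / (eps * bb) powr (1/4)"

definition light :: "'a set \<Rightarrow> 'a set \<Rightarrow> ('a \<times> 'a) set \<Rightarrow> real \<Rightarrow> real \<Rightarrow> real \<Rightarrow> 'a \<times> 'a \<Rightarrow> bool" where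
  "light U L E bb wb eps e \<longleftrightarrow>
     real (edge_bfly U L E e) < bb powr (3/4) / (2 * eps powr (1/4)) \<and>
     edeg E e < wb / (eps * bb) powr (1/4)"

definition appropriate :: "'a set \<Rightarrow> 'a set \<Rightarrow> ('a \<times> 'a) set \<Rightarrow> real \<Rightarrow> real \<Rightarrow> real \<Rightarrow>
    ('a \<times> 'a) set \<Rightarrow> ('a \<times> 'a) set \<Rightarrow> bool" where
  "appropriate U L E bb wb eps PH PL \<longleftrightarrow>
     PH \<union> PL = E \<and> PH \<inter> PL = {} \<and>
     (\<forall>e \<in> E. heavy U L E bb wb eps e \<longrightarrow> e \<in> PH) \<and>
     (\<forall>e \<in> E. light U L E bb wb eps e \<longrightarrow> e \<in> PL)"

end

theory Submission
  imports Defs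
begin

text \<open>
  Swapping the two sums, a butterfly with \<open>\<ell> > 0\<close> edges in \<open>P\<^sub>L\<close> contributes
  \<open>\<ell> \<cdot> 1/\<ell> = 1\<close>, so the total weight counts the butterflies meeting \<open>P\<^sub>L\<close>; the
  deficit from \<open>b\<close> is the number of butterflies with all four edges in \<open>P\<^sub>H\<close>.
  For an appropriate partition such edges are not light. A butterfly is spanned by two
  opposite edges, so with \<open>k\<close> non-light edges there are at most \<open>k(k-1)/2\<close> of them.
  Markov's inequality for \<open>\<Sum>\<^sub>e b(e) = 4b\<close> and \<open>\<Sum>\<^sub>e d\<^sub>e \<le> 2w\<close> gives
  \<open>k \<le> (8 \<cdot> 2\<^sup>3\<^sup>/\<^sup>4 + 12 \<cdot> 2\<^sup>1\<^sup>/\<^sup>4) (\<epsilon>b)\<^sup>1\<^sup>/\<^sup>4 \<le> 27.8 (\<epsilon>b)\<^sup>1\<^sup>/\<^sup>4\<close>,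
  and as \<open>k \<ge> 4\<close> once such a butterfly exists, \<open>k(k-1)/2 \<le> 3k\<^sup>4/128 \<le> 17700 \<epsilon>b\<close>.
\<close>

lemma card_le_mult_card_image:
  assumes "finite A" and "\<And>x. x \<in> A \<Longrightarrow> card {y \<in> A. f y = f x} \<le> k"
  shows "card A \<le> k * card (f ` A)"
proof -
  have "card A = (\<Sum>z \<in> f ` A. card {x \<in> A. f x = z})"
    unfolding card_eq_sum by (rule sum.image_gen[OF assms(1)])
  also have "\<dots> \<le> (\<Sum>z \<in> f ` A. k)"
    by (rule sum_mono) (use assms(2) in auto)
  finally show ?thesis by (simp add: mult.commute)
qed

lemma card_filter_add_card_filter_not:
  assumes "finite A"
  shows "card {x \<in> A. P x} + card {x \<in> A. \<not> P x} = card A"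
proof -
  have "A = {x \<in> A. P x} \<union> {x \<in> A. \<not> P x}" by auto
  then show ?thesis
    using assms by (metis (no_types, lifting) card_Un_disjoint disjoint_iff finite_Un mem_Collect_eq)
qed

lemma card_ge_threshold_mult_le_sum:
  fixes f :: "'a \<Rightarrow> real"
  assumes "finite A" and "\<And>x. x \<in> A \<Longrightarrow> 0 \<le> f x"
  shows "real (card {x \<in> A. t \<le> f x}) * t \<le> sum f A"
proof -
  have "real (card {x \<in> A. t \<le> f x}) * t \<le> sum f {x \<in> A. t \<le> f x}"
    by (rule sum_bounded_below) simp
  also have "\<dots> \<le> sum f A"
    using assms by (intro sum_mono2) auto
  finally show ?thesis .
qed

lemma of_nat_choose_two: "real (n choose 2) = real n * (real n - 1) / 2"
proof (cases n)
  case (Suc m)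
  have "real (n * (n - 1) div 2) = real (n - 1) * real n / 2"
    by (auto simp: field_char_0_class.of_nat_div mod_eq_0_iff_dvd)
  then show ?thesis
    using Suc by (simp add: choose_two algebra_simps)
qed simp

lemma choose_two_le_fourth_power:
  fixes k :: real
  assumes "4 \<le> k"
  shows "k * (k - 1) / 2 \<le> 3 * k ^ 4 / 128"
proof -
  have "16 \<le> k * k"
    using mult_mono[OF assms assms] assms by simp
  then have "0 \<le> k * (k - 4) * (3 * k\<^sup>2 + 12 * k - 16)"
    using assms by (intro mult_nonneg_nonneg) (auto simp: power2_eq_square)
  then show ?thesis by (simp add: algebra_simps power_numeral_reduce)
qed

lemma choose_two_le_of_fourth_root_bound:
  fixes k x :: real
  assumes "0 < x" "4 \<le> k" "k \<le> 27.8 * x powr (1/4)"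
  shows "k * (k - 1) / 2 \<le> 17700 * x"
proof -
  have "k ^ 4 \<le> (27.8 * x powr (1/4)) ^ 4"
    using assms(2,3) by (intro power_mono) auto
  also have "\<dots> = 27.8 ^ 4 * (x powr (1/4)) ^ 4"
    by (simp only: power_mult_distrib)
  also have "\<dots> = 27.8 ^ 4 * x"
    using assms(1) by (simp add: powr_power)
  finally have "3 * k ^ 4 / 128 \<le> 17700 * x"
    using assms(1) by (simp add: power_divide)
  with choose_two_le_fourth_power[OF assms(2)] show ?thesis by linarith
qed

lemma fourth_root_two_constant_le: "8 * 2 powr (3/4) + 12 * 2 powr (1/4) \<le> (27.8 :: real)"
proof -
  have "(2 powr (1/4)) ^ 4 \<le> (1.19 :: real) ^ 4"
    by (simp add: powr_power power_divide)
  then have r: "2 powr (1/4) \<le> (1.19 :: real)"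
    by (subst (asm) power_mono_iff) auto
  have "(2 :: real) powr (3/4) = (2 powr (1/4)) ^ 3"
    by (simp add: powr_power)
  also have "\<dots> \<le> 1.19 ^ 3"
    using r by (intro power_mono) auto
  finally show ?thesis
    using r by (simp add: power_divide)
qed

lemma butterfly_threshold_count_bound:
  fixes b bb eps h :: real
  assumes "0 < b" "0 < eps" "b / 2 \<le> bb"
    and "h * (bb powr (3/4) / (2 * eps powr (1/4))) \<le> 4 * b"
  shows "h \<le> 8 * 2 powr (3/4) * (eps * b) powr (1/4)"
proof (cases "h \<le> 0")
  case False
  have "b powr (3/4) / 2 powr (3/4) = (b / 2) powr (3/4)"
    using assms(1) by (simp add: powr_divide)
  also have "\<dots> \<le> bb powr (3/4)"
    using assms(1,3) by (intro powr_mono2) auto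
  finally have "h * (b powr (3/4) / 2 powr (3/4)) \<le> h * bb powr (3/4)"
    using False by (intro mult_left_mono) auto
  also have "\<dots> \<le> 8 * b * eps powr (1/4)"
    using assms(4) assms(2) by (simp add: field_simps)
  also have "\<dots> = 8 * b powr (3/4) * (eps * b) powr (1/4)"
    using assms(1,2) by (simp add: powr_mult flip: powr_add)
  finally show ?thesis
    using assms(1) by (simp add: field_simps)
next
  case True
  moreover have "0 \<le> 8 * 2 powr (3/4) * (eps * b) powr (1/4)" by simp
  ultimately show ?thesis by linarith
qed

lemma wedge_threshold_count_bound:
  fixes b bb w wb eps h :: real
  assumes "0 < w" "0 < eps" "0 < bb" "bb \<le> 2 * b" "w / 6 \<le> wb"
    and "h * (wb / (eps * bb) powr (1/4)) \<le> 2 * w"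
  shows "h \<le> 12 * 2 powr (1/4) * (eps * b) powr (1/4)"
proof (cases "h \<le> 0")
  case False
  have "h * (w / 6) \<le> h * wb"
    using False assms(5) by (simp add: mult_left_mono)
  also have "\<dots> \<le> 2 * w * (eps * bb) powr (1/4)"
    using assms(6) assms(2,3) by (simp add: field_simps)
  finally have "h \<le> 12 * (eps * bb) powr (1/4)"
    using assms(1) by (simp add: field_simps)
  also have "\<dots> \<le> 12 * (2 * (eps * b)) powr (1/4)"
    using assms(2-4) by (intro mult_left_mono powr_mono2) auto
  also have "\<dots> = 12 * 2 powr (1/4) * (eps * b) powr (1/4)"
    using assms(2-4) by (simp add: powr_mult)
  finally show ?thesis .
next
  case True
  moreover have "0 \<le> 12 * 2 powr (1/4) * (eps * b) powr (1/4)" by simp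
  ultimately show ?thesis by linarith
qed

lemma bip_graph_finite_edges:
  assumes "bip_graph U L E"
  shows "finite E"
  using assms unfolding bip_graph_def by (meson finite_SigmaI finite_subset)

lemma bip_graph_finite_butterflies:
  assumes "bip_graph U L E"
  shows "finite (butterflies U L E)"
proof -
  have "butterflies U L E \<subseteq> Pow (U \<union> L)"
    unfolding butterflies_def by auto
  then show ?thesis
    using assms unfolding bip_graph_def by (meson finite_Pow_iff finite_UnI finite_subset)
qed

lemma butterfliesE:
  assumes "bip_graph U L E" and "B \<in> butterflies U L E"
  obtains u1 u2 v1 v2 where "u1 \<noteq> u2" "v1 \<noteq> v2"
    "(u1, v1) \<in> E" "(u1, v2) \<in> E" "(u2, v1) \<in> E" "(u2, v2) \<in> E"
    "B = {u1, u2, v1, v2}"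
    "bfly_edges U L B = {(u1, v1), (u1, v2), (u2, v1), (u2, v2)}"
proof -
  obtain u1 u2 v1 v2 where uv: "u1 \<in> U" "u2 \<in> U" "v1 \<in> L" "v2 \<in> L" "u1 \<noteq> u2" "v1 \<noteq> v2"
      "(u1, v1) \<in> E" "(u1, v2) \<in> E" "(u2, v1) \<in> E" "(u2, v2) \<in> E" and B: "B = {u1, u2, v1, v2}"
    using assms(2) unfolding butterflies_def by blast
  have "U \<inter> L = {}"
    using assms(1) unfolding bip_graph_def by auto
  then have "B \<inter> U = {u1, u2}" "B \<inter> L = {v1, v2}"
    using uv B by auto
  then have "bfly_edges U L B = {(u1, v1), (u1, v2), (u2, v1), (u2, v2)}"
    unfolding bfly_edges_def by auto
  with uv B that show ?thesis by blast
qed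

lemma bfly_edges_subset:
  assumes "bip_graph U L E" and "B \<in> butterflies U L E"
  shows "bfly_edges U L B \<subseteq> E"
  using assms by (elim butterfliesE) auto

lemma card_bfly_edges:
  assumes "bip_graph U L E" and "B \<in> butterflies U L E"
  shows "card (bfly_edges U L B) = 4"
  using assms by (elim butterfliesE) auto

lemma sum_wt_edge_eq_card_butterflies_meeting:
  assumes "bip_graph U L E" and "finite P"
  shows "(\<Sum>e \<in> P. wt_edge U L E P e) =
    real (card {B \<in> butterflies U L E. bfly_edges U L B \<inter> P \<noteq> {}})"
proof -
  let ?Bf = "butterflies U L E"
  have "(\<Sum>e \<in> P. wt_edge U L E P e) =
      (\<Sum>e \<in> P. \<Sum>B \<in> {B \<in> ?Bf. e \<in> bfly_edges U L B}. wt_bfly U L P B)"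
    unfolding wt_edge_def by simp
  also have "\<dots> = (\<Sum>B \<in> ?Bf. \<Sum>e \<in> {e \<in> P. e \<in> bfly_edges U L B}. wt_bfly U L P B)"
    using assms by (intro sum.swap_restrict) (auto intro: bip_graph_finite_butterflies)
  also have "\<dots> = (\<Sum>B \<in> ?Bf. if bfly_edges U L B \<inter> P \<noteq> {} then 1 else 0)"
  proof (rule sum.cong)
    fix B
    have "{e \<in> P. e \<in> bfly_edges U L B} = bfly_edges U L B \<inter> P" by auto
    then show "(\<Sum>e \<in> {e \<in> P. e \<in> bfly_edges U L B}. wt_bfly U L P B) =
        (if bfly_edges U L B \<inter> P \<noteq> {} then 1 else 0)"
      using assms(2) by (simp add: wt_bfly_def Let_def)
  qed simp
  also have "\<dots> = real (card {B \<in> ?Bf. bfly_edges U L B \<inter> P \<noteq> {}})"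
    using bip_graph_finite_butterflies[OF assms(1)] by (simp add: sum.If_cases Int_def)
  finally show ?thesis .
qed

lemma sum_edge_bfly:
  assumes "bip_graph U L E"
  shows "(\<Sum>e \<in> E. real (edge_bfly U L E e)) = 4 * real (num_bfly U L E)"
proof -
  let ?Bf = "butterflies U L E"
  have "(\<Sum>e \<in> E. real (edge_bfly U L E e)) =
      (\<Sum>e \<in> E. \<Sum>B \<in> {B \<in> ?Bf. e \<in> bfly_edges U L B}. 1)"
    unfolding edge_bfly_def by simp
  also have "\<dots> = (\<Sum>B \<in> ?Bf. \<Sum>e \<in> {e \<in> E. e \<in> bfly_edges U L B}. 1)"
    using assms by (intro sum.swap_restrict bip_graph_finite_edges bip_graph_finite_butterflies)
  also have "\<dots> = (\<Sum>B \<in> ?Bf. 4)"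
  proof (rule sum.cong)
    fix B assume "B \<in> ?Bf"
    then have "{e \<in> E. e \<in> bfly_edges U L B} = bfly_edges U L B"
      "card (bfly_edges U L B) = 4"
      using assms bfly_edges_subset card_bfly_edges by blast+
    then show "(\<Sum>e \<in> {e \<in> E. e \<in> bfly_edges U L B}. 1) = (4 :: real)"
      by simp
  qed simp
  finally show ?thesis
    unfolding num_bfly_def by simp
qed

definition adjacent_edge_pairs :: "('a \<times> 'a) set \<Rightarrow> (('a \<times> 'a) \<times> ('a \<times> 'a)) set" where
  "adjacent_edge_pairs E =
     {(e, f). e \<in> E \<and> f \<in> E \<and> e \<noteq> f \<and> (fst e = fst f \<or> snd e = snd f)}"

lemma card_adjacent_edge_pairs_le:
  assumes "finite E"
  shows "card (adjacent_edge_pairs E) \<le> 2 * num_wedges E"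
proof -
  let ?unordered = "\<lambda>(e, f). {e, f}"
  have "adjacent_edge_pairs E \<subseteq> E \<times> E"
    unfolding adjacent_edge_pairs_def by auto
  then have "finite (adjacent_edge_pairs E)"
    using assms by (meson finite_SigmaI finite_subset)
  moreover have "card {q \<in> adjacent_edge_pairs E. ?unordered q = ?unordered p} \<le> 2" for p
  proof -
    obtain e f where p: "p = (e, f)" by (cases p)
    have "{q \<in> adjacent_edge_pairs E. ?unordered q = ?unordered p} \<subseteq> {(e, f), (f, e)}"
      using p by (auto simp: doubleton_eq_iff)
    then have "card {q \<in> adjacent_edge_pairs E. ?unordered q = ?unordered p} \<le> card {(e, f), (f, e)}"
      by (intro card_mono) auto
    also have "\<dots> \<le> 2"
      by (rule card_insert_le_m1) simp_all
    finally show ?thesis .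
  qed
  ultimately have "card (adjacent_edge_pairs E) \<le> 2 * card (?unordered ` adjacent_edge_pairs E)"
    by (rule card_le_mult_card_image)
  also have "?unordered ` adjacent_edge_pairs E = wedges E"
    unfolding adjacent_edge_pairs_def wedges_def by (fastforce simp: image_iff)
  finally show ?thesis
    unfolding num_wedges_def .
qed

lemma edeg_eq_card_adjacent_edges:
  assumes "bip_graph U L E" and "e \<in> E"
  shows "edeg E e = real (card {f. (e, f) \<in> adjacent_edge_pairs E})"
proof -
  obtain u v where e: "e = (u, v)" "u \<in> U" "v \<in> L"
    using assms unfolding bip_graph_def by auto
  let ?Eu = "{f \<in> E. fst f = u}" and ?Ev = "{f \<in> E. snd f = v}"
  have fin: "finite ?Eu" "finite ?Ev"
    using bip_graph_finite_edges[OF assms(1)] by auto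
  have mem: "e \<in> ?Eu" "e \<in> ?Ev"
    using assms(2) e(1) by auto
  have "{x \<in> E. fst x = u \<or> snd x = u} = ?Eu" "{x \<in> E. fst x = v \<or> snd x = v} = ?Ev"
    using assms(1) e unfolding bip_graph_def by auto
  then have "vdeg E u = Suc (card (?Eu - {e}))" "vdeg E v = Suc (card (?Ev - {e}))"
    unfolding vdeg_def using fin mem by (simp_all only: card.remove)
  moreover have "{f. (e, f) \<in> adjacent_edge_pairs E} = (?Eu - {e}) \<union> (?Ev - {e})"
    using assms(2) e unfolding adjacent_edge_pairs_def by auto
  moreover have "(?Eu - {e}) \<inter> (?Ev - {e}) = {}"
    using e by auto
  ultimately show ?thesis
    unfolding edeg_def using e(1) fin by (simp add: card_Un_disjoint)
qed

lemma sum_edeg_le: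
  assumes "bip_graph U L E"
  shows "(\<Sum>e \<in> E. edeg E e) \<le> 2 * real (num_wedges E)"
proof -
  have fin: "finite E"
    using bip_graph_finite_edges[OF assms] .
  have "(\<Sum>e \<in> E. edeg E e) = (\<Sum>e \<in> E. real (card {f. (e, f) \<in> adjacent_edge_pairs E}))"
    using edeg_eq_card_adjacent_edges[OF assms] by simp
  also have "\<dots> = real (card (SIGMA e:E. {f. (e, f) \<in> adjacent_edge_pairs E}))"
    using fin by (simp add: adjacent_edge_pairs_def)
  also have "(SIGMA e:E. {f. (e, f) \<in> adjacent_edge_pairs E}) = adjacent_edge_pairs E"
    unfolding adjacent_edge_pairs_def by auto
  finally show ?thesis
    using card_adjacent_edge_pairs_le[OF fin] by linarith
qed

lemma num_wedges_pos:
  assumes "bip_graph U L E" and "B \<in> butterflies U L E"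
  shows "0 < num_wedges E"
proof -
  obtain u1 v1 v2 where "v1 \<noteq> v2" "(u1, v1) \<in> E" "(u1, v2) \<in> E"
    using butterfliesE[OF assms] by metis
  then have "{(u1, v1), (u1, v2)} \<in> wedges E"
    unfolding wedges_def by fastforce
  moreover have "finite (wedges E)"
    using bip_graph_finite_edges[OF assms(1)] unfolding wedges_def
    by (rule finite_subset[rotated, OF finite_Pow_iff[THEN iffD2]]) auto
  ultimately show ?thesis
    unfolding num_wedges_def by (auto simp: card_gt_0_iff)
qed

lemma card_butterflies_within_le:
  assumes "bip_graph U L E" and "finite K"
  shows "card {B \<in> butterflies U L E. bfly_edges U L B \<subseteq> K} \<le> card K choose 2"
proof -
  let ?vertices = "\<lambda>S :: ('a \<times> 'a) set. fst ` S \<union> snd ` S"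
  have "{B \<in> butterflies U L E. bfly_edges U L B \<subseteq> K} \<subseteq> ?vertices ` {S. S \<subseteq> K \<and> card S = 2}"
  proof
    fix B assume B: "B \<in> {B \<in> butterflies U L E. bfly_edges U L B \<subseteq> K}"
    then obtain u1 u2 v1 v2 where "u1 \<noteq> u2" "B = {u1, u2, v1, v2}"
      and "{(u1, v1), (u1, v2), (u2, v1), (u2, v2)} \<subseteq> K"
      using butterfliesE[OF assms(1)] by (metis (no_types, lifting) mem_Collect_eq)
    \<comment> \<open>a butterfly is spanned by two opposite edges\<close>
    then have "{(u1, v1), (u2, v2)} \<in> {S. S \<subseteq> K \<and> card S = 2}"
      and "B = ?vertices {(u1, v1), (u2, v2)}"
      by auto
    then show "B \<in> ?vertices ` {S. S \<subseteq> K \<and> card S = 2}"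
      by blast
  qed
  then have "card {B \<in> butterflies U L E. bfly_edges U L B \<subseteq> K}
      \<le> card (?vertices ` {S. S \<subseteq> K \<and> card S = 2})"
    using assms(2) by (intro card_mono) auto
  also have "\<dots> \<le> card {S. S \<subseteq> K \<and> card S = 2}"
    using assms(2) by (intro card_image_le) simp
  also have "\<dots> = card K choose 2"
    by (rule n_subsets[OF assms(2)])
  finally show ?thesis .
qed

lemma card_nonlight_edges_le:
  assumes G: "bip_graph U L E" and "0 < eps"
    and "0 < num_bfly U L E" and "0 < num_wedges E"
    and "real (num_bfly U L E) / 2 \<le> bb" and "bb \<le> 2 * real (num_bfly U L E)"
    and "real (num_wedges E) / 6 \<le> wb"
  shows "real (card {e \<in> E. \<not> light U L E bb wb eps e})
    \<le> 27.8 * (eps * real (num_bfly U L E)) powr (1/4)"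
proof -
  let ?b = "real (num_bfly U L E)" and ?w = "real (num_wedges E)"
  define tb where "tb = bb powr (3/4) / (2 * eps powr (1/4))"
  define tw where "tw = wb / (eps * bb) powr (1/4)"
  let ?Hb = "{e \<in> E. tb \<le> real (edge_bfly U L E e)}"
  let ?Hw = "{e \<in> E. tw \<le> edeg E e}"
  have fin: "finite E"
    using bip_graph_finite_edges[OF G] .
  have "real (card ?Hb) * tb \<le> 4 * ?b"
    using card_ge_threshold_mult_le_sum[OF fin, of "\<lambda>e. real (edge_bfly U L E e)" tb]
    by (simp add: sum_edge_bfly[OF G])
  then have Hb: "real (card ?Hb) \<le> 8 * 2 powr (3/4) * (eps * ?b) powr (1/4)"
    unfolding tb_def using assms by (intro butterfly_threshold_count_bound) auto
  have "real (card ?Hw) * tw \<le> 2 * ?w"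
    using card_ge_threshold_mult_le_sum[OF fin, of "edeg E" tw] sum_edeg_le[OF G]
    by (simp add: edeg_eq_card_adjacent_edges[OF G])
  then have Hw: "real (card ?Hw) \<le> 12 * 2 powr (1/4) * (eps * ?b) powr (1/4)"
    unfolding tw_def using assms by (intro wedge_threshold_count_bound) auto
  have "{e \<in> E. \<not> light U L E bb wb eps e} \<subseteq> ?Hb \<union> ?Hw"
    unfolding light_def tb_def tw_def by auto
  then have "card {e \<in> E. \<not> light U L E bb wb eps e} \<le> card (?Hb \<union> ?Hw)"
    using fin by (intro card_mono) auto
  also have "\<dots> \<le> card ?Hb + card ?Hw"
    by (rule card_Un_le)
  finally have "card {e \<in> E. \<not> light U L E bb wb eps e} \<le> card ?Hb + card ?Hw" .
  moreover have "(8 * 2 powr (3/4) + 12 * 2 powr (1/4)) * (eps * ?b) powr (1/4)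
      \<le> 27.8 * (eps * ?b) powr (1/4)"
    using fourth_root_two_constant_le by (intro mult_right_mono) auto
  ultimately show ?thesis
    using Hb Hw by (simp add: algebra_simps)
qed

lemma card_butterflies_avoiding_light_edges_le:
  assumes G: "bip_graph U L E" and "0 < eps"
    and "real (num_bfly U L E) / 2 \<le> bb" and "bb \<le> 2 * real (num_bfly U L E)"
    and "real (num_wedges E) / 6 \<le> wb"
    and light_in_P: "\<forall>e \<in> E. light U L E bb wb eps e \<longrightarrow> e \<in> P"
  shows "real (card {B \<in> butterflies U L E. bfly_edges U L B \<inter> P = {}})
    \<le> 17700 * eps * real (num_bfly U L E)"
proof (cases "{B \<in> butterflies U L E. bfly_edges U L B \<inter> P = {}} = {}")
  case True
  show ?thesis
    unfolding True using assms(2) by simp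
next
  case False
  then obtain B0 where B0: "B0 \<in> butterflies U L E" "bfly_edges U L B0 \<inter> P = {}"
    by blast
  define K where "K = {e \<in> E. \<not> light U L E bb wb eps e}"
  have finK: "finite K"
    unfolding K_def using bip_graph_finite_edges[OF G] by simp
  have avoiding_within_K: "bfly_edges U L B \<subseteq> K"
    if "B \<in> butterflies U L E" "bfly_edges U L B \<inter> P = {}" for B
    using that light_in_P bfly_edges_subset[OF G] unfolding K_def by blast
  have "card {B \<in> butterflies U L E. bfly_edges U L B \<inter> P = {}}
      \<le> card {B \<in> butterflies U L E. bfly_edges U L B \<subseteq> K}"
    using avoiding_within_K bip_graph_finite_butterflies[OF G] by (intro card_mono) auto
  also have "\<dots> \<le> card K choose 2"
    by (rule card_butterflies_within_le[OF G finK])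
  finally have avoiding_le: "real (card {B \<in> butterflies U L E. bfly_edges U L B \<inter> P = {}})
      \<le> real (card K) * (real (card K) - 1) / 2"
    by (simp flip: of_nat_choose_two)
  have "4 \<le> card K"
    using card_mono[OF finK avoiding_within_K[OF B0]] card_bfly_edges[OF G B0(1)] by simp
  moreover have b_pos: "0 < num_bfly U L E"
    unfolding num_bfly_def using B0(1) bip_graph_finite_butterflies[OF G] card_gt_0_iff by blast
  moreover have "real (card K) \<le> 27.8 * (eps * real (num_bfly U L E)) powr (1/4)"
    unfolding K_def using assms b_pos num_wedges_pos[OF G B0(1)] by (intro card_nonlight_edges_le) auto
  ultimately have "real (card K) * (real (card K) - 1) / 2 \<le> 17700 * (eps * real (num_bfly U L E))"
    using assms(2) by (intro choose_two_le_of_fourth_root_bound) auto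
  with avoiding_le show ?thesis
    by simp
qed

theorem lemma10:
  fixes U L :: "'a set" and E PH PL :: "('a \<times> 'a) set"
  assumes "bip_graph U L E"
    and "PH \<union> PL = E" and "PH \<inter> PL = {}" and "PL \<noteq> {}"
  shows "(\<Sum>e \<in> PL. wt_edge U L E PL e) \<le> real (num_bfly U L E) \<and>
    (\<forall>bb wb eps :: real.
       0 < eps \<and> eps < 1 \<and>
       real (num_bfly U L E) / 2 \<le> bb \<and> bb \<le> 2 * real (num_bfly U L E) \<and>
       real (num_wedges E) / 6 \<le> wb \<and> wb \<le> 6 * real (num_wedges E) \<and>
       appropriate U L E bb wb eps PH PL \<longrightarrow>
       real (num_bfly U L E) * (1 - 17700 * eps) \<le> (\<Sum>e \<in> PL. wt_edge U L E PL e))"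
proof -
  let ?meeting = "{B \<in> butterflies U L E. bfly_edges U L B \<inter> PL \<noteq> {}}"
  let ?avoiding = "{B \<in> butterflies U L E. bfly_edges U L B \<inter> PL = {}}"
  have "finite PL"
    using finite_subset[of PL E] assms(2) bip_graph_finite_edges[OF assms(1)] by blast
  then have total: "(\<Sum>e \<in> PL. wt_edge U L E PL e) = real (card ?meeting)"
    by (rule sum_wt_edge_eq_card_butterflies_meeting[OF assms(1)])
  have "card ?meeting + card ?avoiding = num_bfly U L E"
    using card_filter_add_card_filter_not[OF bip_graph_finite_butterflies[OF assms(1)],
        of "\<lambda>B. bfly_edges U L B \<inter> PL \<noteq> {}"]
    unfolding num_bfly_def by simp
  then have split: "real (card ?meeting) + real (card ?avoiding) = real (num_bfly U L E)"
    by (simp flip: of_nat_add)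
  show ?thesis
  proof (intro conjI allI impI)
    show "(\<Sum>e \<in> PL. wt_edge U L E PL e) \<le> real (num_bfly U L E)"
      using total split by linarith
  next
    fix bb wb eps :: real
    assume "0 < eps \<and> eps < 1 \<and>
       real (num_bfly U L E) / 2 \<le> bb \<and> bb \<le> 2 * real (num_bfly U L E) \<and>
       real (num_wedges E) / 6 \<le> wb \<and> wb \<le> 6 * real (num_wedges E) \<and>
       appropriate U L E bb wb eps PH PL"
    then have "0 < eps" "real (num_bfly U L E) / 2 \<le> bb" "bb \<le> 2 * real (num_bfly U L E)"
      "real (num_wedges E) / 6 \<le> wb" "\<forall>e \<in> E. light U L E bb wb eps e \<longrightarrow> e \<in> PL"
      by (simp_all add: appropriate_def)
    then have "real (card ?avoiding) \<le> 17700 * eps * real (num_bfly U L E)"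
      by (rule card_butterflies_avoiding_light_edges_le[OF assms(1)])
    moreover have "real (num_bfly U L E) * (1 - 17700 * eps)
        = real (num_bfly U L E) - 17700 * eps * real (num_bfly U L E)"
      by (simp add: algebra_simps)
    ultimately show "real (num_bfly U L E) * (1 - 17700 * eps) \<le> (\<Sum>e \<in> PL. wt_edge U L E PL e)"
      using total split by linarith
  qed
qed

end
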